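(* Let $q=p^{m_0}$ with $p$ prime, let $\rho$ be a permutation of $\{0,1,2,\ldots\}$, let $\mathcal O=\mathbb{F}_q[[\pi]]\subset k_\infty=\mathbb{F}_q((\pi))$, let $U$ be the group of units of $\mathcal O$ and $U_1\subseteq U$ the units congruent to $1$ modulo $\pi$. Then, as sets, each of $\mathcal O$, $U$ and $U_1$ is mapped into itself by $\rho_\ast$.
   Context: For $y\in\mathbb{Z}_p$ written $q$-adically as $y=\sum_{j\ge0}c_jq^j$ with $0\le c_j<q$, set $\rho_\ast y:=\sum_{j\ge0}c_jq^{\rho(j)}$; this bijection of $\mathbb{Z}_p$ stabilizes both the nonnegative and the nonpositive integers (negative integers being regarded as elements of $\mathbb{Z}_p$). For $x=\sum_{j\gg-\infty}c_j\pi^j\in k_\infty$ with $c_j\in\mathbb{F}_q$, define $\rho_\ast x:=\sum_{j}c_j\pi^{\rho_\ast j}$; this is a continuous $\mathbb{F}_q$-linear automorphism of $k_\infty$. *)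

theory Defs
  imports "HOL-Computational_Algebra.Formal_Laurent_Series"
begin

text \<open>The j-th q-adic digit of an integer n, viewed as an element of Z_p
  (floor division makes this correct also for negative n).\<close>
definition qdigit :: "int \<Rightarrow> int \<Rightarrow> nat \<Rightarrow> int" where
  "qdigit q n j = (n div q ^ j) mod q"

definition rho_star_int :: "int \<Rightarrow> (nat \<Rightarrow> nat) \<Rightarrow> int \<Rightarrow> int" where
  "rho_star_int q \<rho> n = (THE m. \<forall>j. qdigit q m (\<rho> j) = qdigit q n j)"

definition rho_star :: "int \<Rightarrow> (nat \<Rightarrow> nat) \<Rightarrow> 'a::zero fls \<Rightarrow> 'a fls" where
  "rho_star q \<rho> x = (THE y. \<forall>j. fls_nth y (rho_star_int q \<rho> j) = fls_nth x j)"

definition intO :: "'a::comm_ring_1 fls set" where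
  "intO = {x. \<forall>j<0. fls_nth x j = 0}"

definition unitsO :: "'a::comm_ring_1 fls set" where
  "unitsO = {x \<in> intO. \<exists>y\<in>intO. x * y = 1}"

definition units1O :: "'a::comm_ring_1 fls set" where
  "units1O = {x \<in> unitsO. \<exists>y\<in>intO. x - 1 = fls_X * y}"

end

theory Submission imports Defs begin

text \<open>An integer is nonnegative exactly when almost all of its \<open>q\<close>-adic digits vanish; for
  negative \<open>n\<close> almost all digits equal \<open>q - 1\<close>, since \<open>-1 - n\<close> has the complementary digits.
  As \<open>\<rho>\<^sub>*\<close> only permutes digit positions, it is a bijection of the integers that preserves
  this finiteness condition and fixes \<open>0\<close>. Hence \<open>\<rho>\<^sub>*\<close> on Laurent series merely permutes the
  coefficients at nonnegative exponents and keeps the constant coefficient. Membership in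
  \<open>O\<close>, \<open>U\<close> and \<open>U\<^sub>1\<close> depends only on the vanishing of the negative coefficients and on
  the constant coefficient, so each of these sets is mapped into itself.\<close>

lemma qdigit_0: "qdigit q n 0 = n mod q"
  unfolding qdigit_def by simp

lemma qdigit_Suc: "0 \<le> q \<Longrightarrow> qdigit q n (Suc j) = qdigit q (n div q) j"
  unfolding qdigit_def by (simp add: zdiv_zmult2_eq)

lemma qdigit_bounds: "0 < q \<Longrightarrow> 0 \<le> qdigit q n j \<and> qdigit q n j < q"
  unfolding qdigit_def by simp

lemma minus_one_minus_div_mod:
  fixes n k :: int
  assumes "0 < k"
  shows "(-1 - n) div k = -1 - n div k" and "(-1 - n) mod k = k - 1 - n mod k"
proof -
  have "-1 - n = k * (-1 - n div k) + (k - 1 - n mod k)"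
    by (simp add: algebra_simps minus_div_mult_eq_mod [symmetric])
  moreover have "0 \<le> k - 1 - n mod k" "k - 1 - n mod k < k"
    using assms pos_mod_bound [of k n] pos_mod_sign [of k n] by linarith+
  ultimately show "(-1 - n) div k = -1 - n div k" "(-1 - n) mod k = k - 1 - n mod k"
    by (rule int_div_pos_eq, rule int_mod_pos_eq)
qed

lemma qdigit_minus_one_minus:
  "0 < q \<Longrightarrow> qdigit q (-1 - n) j = q - 1 - qdigit q n j"
  unfolding qdigit_def by (simp add: minus_one_minus_div_mod)

lemma qdigit_eq_0: "0 \<le> n \<Longrightarrow> n < q ^ j \<Longrightarrow> qdigit q n j = 0"
  unfolding qdigit_def by simp

lemma of_nat_less_power: "(2::int) \<le> q \<Longrightarrow> int j < q ^ j"
proof -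
  assume q: "2 \<le> q"
  have "int j < 2 ^ j"
    by (metis less_exp of_nat_less_iff of_nat_numeral of_nat_power)
  also have "\<dots> \<le> q ^ j"
    using q by (intro power_mono) auto
  finally show ?thesis .
qed

lemma finite_qdigit_nonzero:
  assumes q: "2 \<le> q" and n: "0 \<le> n"
  shows "finite {j. qdigit q n j \<noteq> 0}"
proof (rule finite_subset)
  show "{j. qdigit q n j \<noteq> 0} \<subseteq> {..<nat n}"
  proof (rule subsetI, rule ccontr)
    fix j assume "j \<in> {j. qdigit q n j \<noteq> 0}" "j \<notin> {..<nat n}"
    moreover have "n < q ^ j"
      using \<open>j \<notin> {..<nat n}\<close> n of_nat_less_power [OF q, of j] by simp
    ultimately show False
      using qdigit_eq_0 n by simp
  qed
qed simp

lemma nonneg_iff_finite_qdigit_nonzero: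
  assumes q: "2 \<le> q"
  shows "0 \<le> n \<longleftrightarrow> finite {j. qdigit q n j \<noteq> 0}"
proof
  assume "finite {j. qdigit q n j \<noteq> 0}"
  show "0 \<le> n"
  proof (rule ccontr)
    assume "\<not> 0 \<le> n"
    hence "finite {j. qdigit q (-1 - n) j \<noteq> 0}"
      using finite_qdigit_nonzero [OF q] by simp
    moreover have "{j. qdigit q (-1 - n) j \<noteq> 0} = {j. qdigit q n j \<noteq> q - 1}"
      using q by (auto simp: qdigit_minus_one_minus)
    ultimately have "finite {j. qdigit q n j \<noteq> q - 1}" by simp
    moreover have "UNIV = {j. qdigit q n j \<noteq> 0} \<union> {j. qdigit q n j \<noteq> q - 1}"
      using q by auto
    ultimately show False
      using \<open>finite {j. qdigit q n j \<noteq> 0}\<close> by (metis finite_Un infinite_UNIV_nat)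
  qed
qed (rule finite_qdigit_nonzero [OF q])

lemma mod_power_eq_if_qdigit_eq:
  assumes q: "2 \<le> q" and d: "\<And>j. qdigit q m j = qdigit q n j"
  shows "m mod q ^ J = n mod q ^ J"
proof (induction J)
  case (Suc J)
  have "k mod q ^ Suc J = q ^ J * qdigit q k J + k mod q ^ J" for k
    unfolding power_Suc2 qdigit_def using q by (intro zmod_zmult2_eq) simp
  with Suc d show ?case by metis
qed simp

lemma eq_if_qdigit_eq:
  assumes q: "2 \<le> q" and d: "\<forall>j. qdigit q m j = qdigit q n j"
  shows "m = n"
proof (rule ccontr)
  assume "m \<noteq> n"
  define J where "J = nat (\<bar>m\<bar> + \<bar>n\<bar>)"
  have "q ^ J dvd m - n"
    using mod_power_eq_if_qdigit_eq [OF q d [rule_format]] by (simp add: mod_eq_dvd_iff)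
  hence "q ^ J \<le> \<bar>m - n\<bar>"
    using \<open>m \<noteq> n\<close> q dvd_imp_le_int [of "m - n" "q ^ J"] by simp
  with of_nat_less_power [OF q, of J] show False
    unfolding J_def by linarith
qed

lemma ex_qdigit_eq_if_finite:
  assumes q: "2 \<le> q" and d: "\<And>j. 0 \<le> d j \<and> d j < q" and fin: "finite {j. d j \<noteq> 0}"
  shows "\<exists>m. \<forall>j. qdigit q m j = d j"
proof -
  obtain N where "{j. d j \<noteq> 0} \<subseteq> {..<N}"
    using finite_nat_bounded [OF fin] by blast
  hence "\<And>j. N \<le> j \<Longrightarrow> d j = 0" by auto
  with d show ?thesis
  proof (induction N arbitrary: d)
    case 0
    hence "\<forall>j. qdigit q 0 j = d j" by (simp add: qdigit_def)
    thus ?case by blast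
  next
    case (Suc N)
    have "\<And>j. 0 \<le> d (Suc j) \<and> d (Suc j) < q" "\<And>j. N \<le> j \<Longrightarrow> d (Suc j) = 0"
      using Suc.prems by simp_all
    then obtain m where m: "\<forall>j. qdigit q m j = d (Suc j)"
      using Suc.IH [of "\<lambda>j. d (Suc j)"] by blast
    have "qdigit q (d 0 + q * m) j = d j" for j
      using q Suc.prems(1) [of 0] m by (cases j) (simp_all add: qdigit_0 qdigit_Suc)
    thus ?case by blast
  qed
qed

lemma ex_qdigit_eq_comp_bij:
  assumes q: "2 \<le> q" and \<tau>: "bij \<tau>"
  shows "\<exists>m. \<forall>k. qdigit q m k = qdigit q n (\<tau> k)"
proof -
  have perm: "\<exists>m. \<forall>k. qdigit q m k = qdigit q n (\<tau> k)" if "0 \<le> n" for n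
  proof (rule ex_qdigit_eq_if_finite [OF q])
    have "{k. qdigit q n (\<tau> k) \<noteq> 0} = \<tau> -` {j. qdigit q n j \<noteq> 0}"
      by auto
    thus "finite {k. qdigit q n (\<tau> k) \<noteq> 0}"
      using finite_vimageI [OF finite_qdigit_nonzero [OF q that] bij_is_inj [OF \<tau>]] by simp
  qed (use q qdigit_bounds in simp)
  show ?thesis
  proof (cases "0 \<le> n")
    case False
    then obtain m where "\<forall>k. qdigit q m k = qdigit q (-1 - n) (\<tau> k)"
      using perm [of "-1 - n"] by auto
    hence "\<forall>k. qdigit q (-1 - m) k = qdigit q n (\<tau> k)"
      using q by (simp add: qdigit_minus_one_minus)
    thus ?thesis by blast
  qed (use perm in blast)
qed

lemma bij_all_comp_eq_iff:
  assumes "bij f"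
  shows "(\<forall>j. g (f j) = h j) \<longleftrightarrow> (\<forall>k. g k = h (inv f k))"
proof -
  have inv_f: "inv f (f j) = j" "f (inv f k) = k" for j k
    using assms by (simp_all add: bij_is_inj bij_is_surj surj_f_inv_f)
  show ?thesis
  proof (intro iffI allI)
    fix k assume "\<forall>j. g (f j) = h j"
    from this [rule_format, of "inv f k"] show "g k = h (inv f k)"
      by (simp only: inv_f)
  next
    fix j assume "\<forall>k. g k = h (inv f k)"
    from this [rule_format, of "f j"] show "g (f j) = h j"
      by (simp only: inv_f)
  qed
qed

lemma qdigit_rho_star_int:
  assumes q: "2 \<le> q" and \<rho>: "bij \<rho>"
  shows "qdigit q (rho_star_int q \<rho> n) k = qdigit q n (inv \<rho> k)"
proof -
  obtain m where m: "\<forall>k. qdigit q m k = qdigit q n (inv \<rho> k)"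
    using ex_qdigit_eq_comp_bij [OF q bij_imp_bij_inv [OF \<rho>]] by blast
  have "rho_star_int q \<rho> n = m"
    unfolding rho_star_int_def bij_all_comp_eq_iff [OF \<rho>]
  proof (rule the_equality)
    show "\<forall>k. qdigit q m k = qdigit q n (inv \<rho> k)" by (fact m)
    show "m' = m" if "\<forall>k. qdigit q m' k = qdigit q n (inv \<rho> k)" for m'
      using that m by (intro eq_if_qdigit_eq [OF q]) simp
  qed
  with m show ?thesis by simp
qed

lemma bij_rho_star_int:
  assumes q: "2 \<le> q" and \<rho>: "bij \<rho>"
  shows "bij (rho_star_int q \<rho>)"
proof (rule bijI)
  have inv_\<rho>: "inv \<rho> (\<rho> k) = k" "\<rho> (inv \<rho> j) = j" for j k
    using \<rho> by (simp_all add: bij_is_inj bij_is_surj surj_f_inv_f)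
  show "inj (rho_star_int q \<rho>)"
  proof (rule injI)
    fix a b assume "rho_star_int q \<rho> a = rho_star_int q \<rho> b"
    hence "qdigit q a (inv \<rho> k) = qdigit q b (inv \<rho> k)" for k
      by (simp flip: qdigit_rho_star_int [OF q \<rho>])
    hence "\<forall>j. qdigit q a j = qdigit q b j"
      using inv_\<rho>(1) by metis
    thus "a = b" by (rule eq_if_qdigit_eq [OF q])
  qed
  show "surj (rho_star_int q \<rho>)"
    unfolding surj_def
  proof
    fix m
    obtain n where "\<forall>k. qdigit q n k = qdigit q m (\<rho> k)"
      using ex_qdigit_eq_comp_bij [OF q \<rho>] by blast
    hence "\<forall>k. qdigit q (rho_star_int q \<rho> n) k = qdigit q m k"
      by (simp add: qdigit_rho_star_int [OF q \<rho>] inv_\<rho>)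
    hence "rho_star_int q \<rho> n = m" by (rule eq_if_qdigit_eq [OF q])
    thus "\<exists>n. m = rho_star_int q \<rho> n" by blast
  qed
qed

lemma rho_star_int_nonneg_iff:
  assumes q: "2 \<le> q" and \<rho>: "bij \<rho>"
  shows "0 \<le> rho_star_int q \<rho> n \<longleftrightarrow> 0 \<le> n"
proof -
  have "{k. qdigit q (rho_star_int q \<rho> n) k \<noteq> 0} = inv \<rho> -` {j. qdigit q n j \<noteq> 0}"
    by (simp add: qdigit_rho_star_int [OF q \<rho>] vimage_def)
  moreover have "finite (inv \<rho> -` {j. qdigit q n j \<noteq> 0}) \<longleftrightarrow> finite {j. qdigit q n j \<noteq> 0}"
    by (rule finite_vimage_iff [OF bij_imp_bij_inv [OF \<rho>]])
  ultimately show ?thesis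
    by (simp only: nonneg_iff_finite_qdigit_nonzero [OF q])
qed

lemma rho_star_int_0:
  assumes q: "2 \<le> q" and \<rho>: "bij \<rho>"
  shows "rho_star_int q \<rho> 0 = 0"
  by (rule eq_if_qdigit_eq [OF q]) (simp add: qdigit_rho_star_int [OF q \<rho>], simp add: qdigit_def)

lemma bij_nonneg_imp_inv_neg:
  fixes \<sigma> :: "int \<Rightarrow> int"
  assumes "bij \<sigma>" "\<And>n. 0 \<le> n \<Longrightarrow> 0 \<le> \<sigma> n" "k < 0"
  shows "inv \<sigma> k < 0"
proof (rule ccontr)
  assume "\<not> inv \<sigma> k < 0"
  hence "0 \<le> \<sigma> (inv \<sigma> k)" using assms(2) by simp
  with assms(1,3) show False by (simp add: bij_is_surj surj_f_inv_f)
qed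

lemma ex1_fls_reindex_intO:
  fixes x :: "'a::comm_ring_1 fls"
  assumes \<sigma>: "bij \<sigma>" "\<And>n. 0 \<le> n \<Longrightarrow> 0 \<le> \<sigma> n" and x: "x \<in> intO"
  shows "\<exists>!y. \<forall>j. fls_nth y (\<sigma> j) = fls_nth x j"
proof -
  define y :: "'a fls" where "y = fps_to_fls (Abs_fps (\<lambda>n. fls_nth x (inv \<sigma> (int n))))"
  have "fls_nth y k = fls_nth x (inv \<sigma> k)" for k
    using x bij_nonneg_imp_inv_neg [OF \<sigma>, of k] unfolding y_def intO_def by (cases "k < 0") auto
  moreover have "y' = y" if "\<forall>k. fls_nth y' k = fls_nth x (inv \<sigma> k)" for y'
    using that calculation by (intro fls_eqI) simp
  ultimately show ?thesis
    unfolding bij_all_comp_eq_iff [OF \<sigma>(1)] by blast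
qed

lemma fls_reindex_in_intO:
  assumes \<sigma>: "bij \<sigma>" "\<And>n. 0 \<le> n \<Longrightarrow> 0 \<le> \<sigma> n" and x: "x \<in> intO"
    and y: "\<forall>j. fls_nth y (\<sigma> j) = fls_nth x j"
  shows "y \<in> intO"
  using x y bij_nonneg_imp_inv_neg [OF \<sigma>] unfolding bij_all_comp_eq_iff [OF \<sigma>(1)] intO_def by simp

lemma rho_star_in_intO:
  fixes x :: "'a::comm_ring_1 fls"
  assumes q: "2 \<le> q" and \<rho>: "bij \<rho>" and x: "x \<in> intO"
  shows "rho_star q \<rho> x \<in> intO" and "fls_nth (rho_star q \<rho> x) 0 = fls_nth x 0"
proof -
  have \<sigma>: "bij (rho_star_int q \<rho>)" "\<And>n. 0 \<le> n \<Longrightarrow> 0 \<le> rho_star_int q \<rho> n"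
    using bij_rho_star_int [OF q \<rho>] rho_star_int_nonneg_iff [OF q \<rho>] by simp_all
  have y: "\<forall>j. fls_nth (rho_star q \<rho> x) (rho_star_int q \<rho> j) = fls_nth x j"
    unfolding rho_star_def by (rule theI' [OF ex1_fls_reindex_intO [OF \<sigma> x]])
  show "rho_star q \<rho> x \<in> intO"
    by (rule fls_reindex_in_intO [OF \<sigma> x y])
  show "fls_nth (rho_star q \<rho> x) 0 = fls_nth x 0"
    using y rho_star_int_0 [OF q \<rho>] by metis
qed

lemma unitsO_iff:
  fixes x :: "'a::field fls"
  shows "x \<in> unitsO \<longleftrightarrow> x \<in> intO \<and> fls_nth x 0 \<noteq> 0"
proof
  assume "x \<in> unitsO"
  then obtain y where x: "x \<in> intO" and y: "y \<in> intO" and xy: "x * y = 1"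
    unfolding unitsO_def by auto
  have "x \<noteq> 0" "y \<noteq> 0" using xy by auto
  have "0 \<le> fls_subdegree x" "0 \<le> fls_subdegree y"
    using x y unfolding intO_def by (auto intro: fls_subdegree_ge0I)
  moreover have "fls_subdegree x + fls_subdegree y = 0"
    using fls_subdegree_mult [OF \<open>x \<noteq> 0\<close> \<open>y \<noteq> 0\<close>] xy by simp
  ultimately have "fls_subdegree x = 0" by linarith
  with nth_fls_subdegree_nonzero [OF \<open>x \<noteq> 0\<close>] x show "x \<in> intO \<and> fls_nth x 0 \<noteq> 0"
    by simp
next
  assume x: "x \<in> intO \<and> fls_nth x 0 \<noteq> 0"
  hence "x \<noteq> 0" by auto
  have "fls_subdegree x = 0"
    using x unfolding intO_def by (intro fls_subdegree_eqI) auto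
  hence "inverse x \<in> intO" unfolding intO_def by simp
  moreover have "x * inverse x = 1" using \<open>x \<noteq> 0\<close> by simp
  ultimately show "x \<in> unitsO" using x unfolding unitsO_def by auto
qed

lemma units1O_iff:
  fixes x :: "'a::comm_ring_1 fls"
  shows "x \<in> units1O \<longleftrightarrow> x \<in> unitsO \<and> fls_nth x 0 = 1"
proof
  assume "x \<in> units1O"
  then obtain y where x: "x \<in> unitsO" and y: "y \<in> intO" and xy: "x - 1 = fls_X * y"
    unfolding units1O_def by auto
  have "fls_nth (x - 1) 0 = fls_nth y (-1)" using xy by (simp add: fls_X_times_conv_shift)
  also have "\<dots> = 0" using y unfolding intO_def by simp
  finally show "x \<in> unitsO \<and> fls_nth x 0 = 1" using x by simp
next
  assume x: "x \<in> unitsO \<and> fls_nth x 0 = 1"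
  define y where "y = fls_shift 1 (x - 1)"
  have "x - 1 = fls_X * y"
    unfolding y_def by (intro fls_eqI) (simp add: fls_X_times_conv_shift)
  moreover have "fls_nth y j = 0" if "j < 0" for j
    using x that unfolding y_def unitsO_def intO_def by (cases "j = -1") auto
  ultimately show "x \<in> units1O" using x unfolding units1O_def intO_def by auto
qed

theorem proposition7p10:
  fixes p m0 :: nat and q :: int and \<rho> :: "nat \<Rightarrow> nat"
  assumes "prime p" and "m0 \<ge> 1" and "q = int p ^ m0"
    and "card (UNIV :: 'a::{field,finite} set) = p ^ m0"
    and "bij \<rho>"
  shows "rho_star q \<rho> ` (intO :: 'a fls set) \<subseteq> intO \<and>
    rho_star q \<rho> ` (unitsO :: 'a fls set) \<subseteq> unitsO \<and>
    rho_star q \<rho> ` (units1O :: 'a fls set) \<subseteq> units1O"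
proof -
  have "2 \<le> int p" using \<open>prime p\<close> prime_ge_2_nat by auto
  also have "\<dots> \<le> q"
    using \<open>q = int p ^ m0\<close> \<open>m0 \<ge> 1\<close> \<open>2 \<le> int p\<close> by (simp add: self_le_power)
  finally have q: "2 \<le> q" .
  note O = rho_star_in_intO [OF q \<open>bij \<rho>\<close>]
  show ?thesis
  proof (intro conjI image_subsetI)
    fix x :: "'a fls"
    show "x \<in> intO \<Longrightarrow> rho_star q \<rho> x \<in> intO"
      by (rule O(1))
    show "x \<in> unitsO \<Longrightarrow> rho_star q \<rho> x \<in> unitsO"
      by (simp add: O unitsO_iff)
    show "x \<in> units1O \<Longrightarrow> rho_star q \<rho> x \<in> units1O"
      by (simp add: O unitsO_iff units1O_iff)
  qed
qed

end
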